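(* In the category $\mathsf{Top}$ of topological spaces and continuous maps, a space is (1) finitely generated with respect to embeddings if, and only if, it is finite; and (2) finitely generated with respect to open embeddings if, and only if, it is compact.
   Context: An embedding is an injective continuous map $m:X\to Y$ such that $X$ carries the initial topology (every open set of $X$ is $m^{-1}(U)$ for some open $U\subseteq Y$); an open embedding is an embedding with open image. For a class $\mathcal{M}$ of monomorphisms in a category $\mathcal{C}$, an object $X$ is finitely generated w.r.t. $\mathcal{M}$ if for every directed diagram $(Z_i)_{i\in I}$ (indexed by a directed poset $I$, i.e. every finite subset has an upper bound) whose connecting morphisms $z_{i,j}:Z_i\to Z_j$ lie in $\mathcal{M}$, with colimit cocone $c_i:Z_i\to Z$ in $\mathcal{C}$, every morphism $f:X\to Z$ factorizes essentially uniquely through some $c_i$: (i) there are $i\in I$ and $g:X\to Z_i$ with $f=c_i\cdot g$, and (ii) if also $g':X\to Z_i$ satisfies $f=c_i\cdot g'$, then some connecting morphism $z_{i,j}$ satisfies $z_{i,j}\cdot g=z_{i,j}\cdot g'$. *)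

theory Defs
  imports "HOL-Analysis.Analysis"
begin

definition open_embedding_map :: "'a topology \<Rightarrow> 'b topology \<Rightarrow> ('a \<Rightarrow> 'b) \<Rightarrow> bool" where
  "open_embedding_map X Y f \<longleftrightarrow> embedding_map X Y f \<and> openin Y (f ` topspace X)"

text \<open>A directed poset (I, le): le is a partial order on I and every finite
  subset of I has an upper bound in I (so in particular I is nonempty).\<close>
definition directed_poset :: "'i set \<Rightarrow> ('i \<Rightarrow> 'i \<Rightarrow> bool) \<Rightarrow> bool" where
  "directed_poset I le \<longleftrightarrow>
     (\<forall>i\<in>I. le i i) \<and>
     (\<forall>i\<in>I. \<forall>j\<in>I. \<forall>k\<in>I. le i j \<longrightarrow> le j k \<longrightarrow> le i k) \<and>
     (\<forall>i\<in>I. \<forall>j\<in>I. le i j \<longrightarrow> le j i \<longrightarrow> i = j) \<and>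
     (\<forall>F. finite F \<and> F \<subseteq> I \<longrightarrow> (\<exists>u\<in>I. \<forall>i\<in>F. le i u))"

text \<open>Morphisms are continuous maps; equality of morphisms is equality on the topspace.\<close>
definition directed_diagram ::
  "('b topology \<Rightarrow> 'b topology \<Rightarrow> ('b \<Rightarrow> 'b) \<Rightarrow> bool) \<Rightarrow>
   'i set \<Rightarrow> ('i \<Rightarrow> 'i \<Rightarrow> bool) \<Rightarrow> ('i \<Rightarrow> 'b topology) \<Rightarrow> ('i \<Rightarrow> 'i \<Rightarrow> 'b \<Rightarrow> 'b) \<Rightarrow> bool" where
  "directed_diagram M I le Z z \<longleftrightarrow>
     directed_poset I le \<and>
     (\<forall>i\<in>I. \<forall>j\<in>I. le i j \<longrightarrow> continuous_map (Z i) (Z j) (z i j) \<and> M (Z i) (Z j) (z i j)) \<and>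
     (\<forall>i\<in>I. \<forall>x\<in>topspace (Z i). z i i x = x) \<and>
     (\<forall>i\<in>I. \<forall>j\<in>I. \<forall>k\<in>I. le i j \<longrightarrow> le j k \<longrightarrow>
        (\<forall>x\<in>topspace (Z i). z j k (z i j x) = z i k x))"

text \<open>Directed colimits in Top are formed as in Set (quotient of the disjoint union by
  eventual equality) and equipped with the final topology w.r.t. the colimit maps;
  this is stated here concretely (HOL cannot quantify over all test spaces of all types).\<close>
definition directed_colimit_Top ::
  "'i set \<Rightarrow> ('i \<Rightarrow> 'i \<Rightarrow> bool) \<Rightarrow> ('i \<Rightarrow> 'b topology) \<Rightarrow> ('i \<Rightarrow> 'i \<Rightarrow> 'b \<Rightarrow> 'b) \<Rightarrow>
   'c topology \<Rightarrow> ('i \<Rightarrow> 'b \<Rightarrow> 'c) \<Rightarrow> bool" where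
  "directed_colimit_Top I le Z z C c \<longleftrightarrow>
     (\<forall>i\<in>I. continuous_map (Z i) C (c i)) \<and>
     (\<forall>i\<in>I. \<forall>j\<in>I. le i j \<longrightarrow> (\<forall>x\<in>topspace (Z i). c j (z i j x) = c i x)) \<and>
     topspace C = (\<Union>i\<in>I. c i ` topspace (Z i)) \<and>
     (\<forall>i\<in>I. \<forall>j\<in>I. \<forall>x\<in>topspace (Z i). \<forall>y\<in>topspace (Z j).
        c i x = c j y \<longrightarrow> (\<exists>k\<in>I. le i k \<and> le j k \<and> z i k x = z j k y)) \<and>
     (\<forall>U. openin C U \<longleftrightarrow>
        U \<subseteq> topspace C \<and> (\<forall>i\<in>I. openin (Z i) {x \<in> topspace (Z i). c i x \<in> U}))"

definition fin_generated ::
  "'i itself \<Rightarrow> 'c itself \<Rightarrow> ('b topology \<Rightarrow> 'b topology \<Rightarrow> ('b \<Rightarrow> 'b) \<Rightarrow> bool) \<Rightarrow>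
   'a topology \<Rightarrow> bool" where
  "fin_generated (_ :: 'i itself) (_ :: 'c itself) M X \<longleftrightarrow>
     (\<forall>(I :: 'i set) le (Z :: 'i \<Rightarrow> 'b topology) z (C :: 'c topology) c (f :: 'a \<Rightarrow> 'c).
        directed_diagram M I le Z z \<and> directed_colimit_Top I le Z z C c \<and>
        continuous_map X C f \<longrightarrow>
        (\<exists>i\<in>I. \<exists>g. continuous_map X (Z i) g \<and> (\<forall>x\<in>topspace X. f x = c i (g x))) \<and>
        (\<forall>i\<in>I. \<forall>g g'. continuous_map X (Z i) g \<and> (\<forall>x\<in>topspace X. f x = c i (g x)) \<and>
            continuous_map X (Z i) g' \<and> (\<forall>x\<in>topspace X. f x = c i (g' x)) \<longrightarrow>
            (\<exists>j\<in>I. le i j \<and> (\<forall>x\<in>topspace X. z i j (g x) = z i j (g' x)))))"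

end

theory Submission
  imports Defs
begin

(* Along embeddings the colimit maps c i are injective, so lifts through a stage are unique, and
   f lifts set-theoretically through stage j once f(X) lies in the image of c j; finitely many
   stages lie in a single one. If X is finite, so is f(X), and the lift is continuous because c j
   reflects the specialization preorder while a map out of a finite space is continuous as soon
   as it preserves that preorder. Along open embeddings the images of the c i form an open cover
   of the colimit and each c j is an open embedding, so compactness of f(X) yields the stage and
   continuity of the lift.
   Conversely, a space T is the directed colimit of the subspaces spanned by finite subfamilies
   of a cover U whenever it carries the final topology for them. This applies to the indiscrete
   topology on the points of X with U the singletons, and to X itself with U an open cover;
   lifting the identity of X through a single stage shows that X is finite, resp. that U has a
   finite subcover. *)

lemma embedding_map_closure_of_singleton_iff:
  assumes emb: "embedding_map A B h" and u: "u \<in> topspace A" and v: "v \<in> topspace A"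
  shows "h u \<in> B closure_of {h v} \<longleftrightarrow> u \<in> A closure_of {v}"
proof -
  have hom: "homeomorphic_map A (subtopology B (h ` topspace A)) h"
    using emb by (simp add: embedding_map_def)
  have "subtopology B (h ` topspace A) closure_of (h ` {v}) = h ` (A closure_of {v})"
    using homeomorphic_map_closure_of[OF hom] v by blast
  then have "h ` topspace A \<inter> B closure_of {h v} = h ` (A closure_of {v})"
    using v by (simp add: closure_of_subtopology)
  moreover have "inj_on h (topspace A)"
    using hom homeomorphic_imp_injective_map by blast
  ultimately show ?thesis
    using u closure_of_subset_topspace by (metis IntD2 IntI image_eqI inj_on_image_mem_iff)
qed

lemma continuous_map_factor_through_embedding:
  assumes emb: "embedding_map A B h" and cont: "continuous_map X B (h \<circ> g)"
    and g: "g \<in> topspace X \<rightarrow> topspace A"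
  shows "continuous_map X A g"
proof -
  obtain h' where h': "homeomorphic_maps A (subtopology B (h ` topspace A)) h h'"
    using emb by (auto simp: embedding_map_def homeomorphic_map_maps)
  then have h'_cont: "continuous_map (subtopology B (h ` topspace A)) A h'"
    and h'_h: "\<And>y. y \<in> topspace A \<Longrightarrow> h' (h y) = y"
    by (simp_all add: homeomorphic_maps_def)
  have "continuous_map X (subtopology B (h ` topspace A)) (h \<circ> g)"
    using cont g by (auto simp: continuous_map_in_subtopology)
  then have "continuous_map X A (h' \<circ> (h \<circ> g))"
    using h'_cont by (rule continuous_map_compose)
  then show ?thesis
    by (rule continuous_map_eq) (use g h'_h in auto)
qed

lemma continuous_map_from_finite_space:
  assumes fin: "finite (topspace X)" and g: "g \<in> topspace X \<rightarrow> topspace Y"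
    and mono: "\<And>x y. \<lbrakk>x \<in> topspace X; y \<in> topspace X; x \<in> X closure_of {y}\<rbrakk>
                  \<Longrightarrow> g x \<in> Y closure_of {g y}"
  shows "continuous_map X Y g"
  unfolding continuous_map_closedin
proof (intro conjI allI impI g)
  fix F assume F: "closedin Y F"
  define P where "P = {x \<in> topspace X. g x \<in> F}"
  have closure_in_P: "X closure_of {y} \<subseteq> P" if y: "y \<in> P" for y
  proof
    fix x assume x: "x \<in> X closure_of {y}"
    have x_X: "x \<in> topspace X"
      using x closure_of_subset_topspace by fast
    have "g x \<in> Y closure_of {g y}"
      using mono x_X x y by (simp add: P_def)
    also have "\<dots> \<subseteq> F"
      using F y by (simp add: P_def closure_of_minimal)
    finally show "x \<in> P"
      using x_X by (simp add: P_def)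
  qed
  \<comment> \<open>In a finite space, a set closed under specialization is a finite union of closed sets.\<close>
  have "P = (\<Union>y\<in>P. X closure_of {y})"
  proof (rule antisym)
    show "P \<subseteq> (\<Union>y\<in>P. X closure_of {y})"
    proof
      fix y assume "y \<in> P"
      then have "y \<in> X closure_of {y}"
        using closure_of_subset[of "{y}" X] by (simp add: P_def)
      with \<open>y \<in> P\<close> show "y \<in> (\<Union>y\<in>P. X closure_of {y})" by blast
    qed
    show "(\<Union>y\<in>P. X closure_of {y}) \<subseteq> P"
      using closure_in_P by blast
  qed
  moreover have "finite P"
    using fin by (simp add: P_def)
  then have "closedin X (\<Union>y\<in>P. X closure_of {y})"
    by (intro closedin_Union) auto
  ultimately show "closedin X {x \<in> topspace X. g x \<in> F}"
    by (simp add: P_def)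
qed

lemma obtain_factor_through_image:
  assumes "f ` S \<subseteq> h ` T"
  obtains g where "g \<in> S \<rightarrow> T" "\<And>x. x \<in> S \<Longrightarrow> f x = h (g x)"
proof
  show "inv_into T h \<circ> f \<in> S \<rightarrow> T"
  proof
    fix x assume "x \<in> S"
    then have "f x \<in> h ` T" using assms by blast
    then show "(inv_into T h \<circ> f) x \<in> T" by (simp add: inv_into_into)
  qed
  show "f x = h ((inv_into T h \<circ> f) x)" if "x \<in> S" for x
    using assms that by (auto simp: f_inv_into_f)
qed

lemma embedding_map_inclusion:
  "S \<subseteq> T \<Longrightarrow> embedding_map (subtopology X S) (subtopology X T) (\<lambda>x. x)"
  unfolding embedding_map_def
  by (simp add: subtopology_subtopology flip: id_def)
    (metis Int_absorb1 inf.commute inf_left_commute subtopology_restrict)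

lemma open_embedding_map_inclusion:
  assumes S: "openin X S" and ST: "S \<subseteq> T"
  shows "open_embedding_map (subtopology X S) (subtopology X T) (\<lambda>x. x)"
proof -
  have "topspace (subtopology X S) = S"
    using openin_subset[OF S] by (auto simp: topspace_subtopology)
  moreover have "openin (subtopology X T) S"
    using openin_subtopology_Int2[OF S, of T] ST by (simp add: Int_absorb1)
  ultimately show ?thesis
    using ST by (simp add: open_embedding_map_def embedding_map_inclusion)
qed

lemma open_embedding_imp_embedding_map: "open_embedding_map A B h \<Longrightarrow> embedding_map A B h"
  by (simp add: open_embedding_map_def)

lemma open_embedding_imp_open_map:
  assumes "open_embedding_map A B h"
  shows "open_map A B h"
  unfolding open_map_def
proof (intro allI impI)
  fix W assume W: "openin A W"
  have hom: "homeomorphic_map A (subtopology B (h ` topspace A)) h"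
    using assms by (simp add: open_embedding_map_def embedding_map_def)
  have "openin (subtopology B (h ` topspace A)) (h ` W)"
    using homeomorphic_map_openness[OF hom openin_subset[OF W]] W by blast
  then show "openin B (h ` W)"
    using assms openin_trans_full by (auto simp: open_embedding_map_def)
qed

definition indiscrete_topology :: "'a set \<Rightarrow> 'a topology" where
  "indiscrete_topology S = topology (\<lambda>U. U = {} \<or> U = S)"

lemma openin_indiscrete_topology: "openin (indiscrete_topology S) U \<longleftrightarrow> U = {} \<or> U = S"
proof -
  have "istopology (\<lambda>U. U = {} \<or> U = S)"
    unfolding istopology_def by auto
  then show ?thesis
    by (simp add: indiscrete_topology_def topology_inverse')
qed

lemma topspace_indiscrete_topology [simp]: "topspace (indiscrete_topology S) = S"
  by (auto simp: topspace_def openin_indiscrete_topology)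

lemma subtopology_indiscrete_topology:
  "A \<subseteq> S \<Longrightarrow> subtopology (indiscrete_topology S) A = indiscrete_topology A"
  by (auto simp: topology_eq openin_subtopology openin_indiscrete_topology)

lemma continuous_map_into_indiscrete_topology:
  assumes "f \<in> topspace X \<rightarrow> S"
  shows "continuous_map X (indiscrete_topology S) f"
proof -
  have "{x \<in> topspace X. f x \<in> S} = topspace X"
    using assms by auto
  then show ?thesis
    using assms by (auto simp: continuous_map_def openin_indiscrete_topology)
qed

locale embedding_directed_colimit =
  fixes M :: "'b topology \<Rightarrow> 'b topology \<Rightarrow> ('b \<Rightarrow> 'b) \<Rightarrow> bool"
    and I :: "'i set" and le :: "'i \<Rightarrow> 'i \<Rightarrow> bool"
    and Z :: "'i \<Rightarrow> 'b topology" and z :: "'i \<Rightarrow> 'i \<Rightarrow> 'b \<Rightarrow> 'b"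
    and C :: "'c topology" and c :: "'i \<Rightarrow> 'b \<Rightarrow> 'c"
  assumes diagram: "directed_diagram M I le Z z"
    and colimit: "directed_colimit_Top I le Z z C c"
    and M_embedding: "\<And>A B h. M A B h \<Longrightarrow> embedding_map A B h"
begin

lemma directed_poset: "directed_poset I le"
  using diagram unfolding directed_diagram_def by (elim conjE)

lemma index_refl:
  assumes "i \<in> I"
  shows "le i i"
proof -
  have "\<forall>i\<in>I. le i i"
    using directed_poset unfolding directed_poset_def by (elim conjE)
  then show ?thesis
    using assms by blast
qed

lemma index_trans:
  assumes "i \<in> I" "j \<in> I" "k \<in> I" "le i j" "le j k"
  shows "le i k"
proof -
  have "\<forall>i\<in>I. \<forall>j\<in>I. \<forall>k\<in>I. le i j \<longrightarrow> le j k \<longrightarrow> le i k"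
    using directed_poset unfolding directed_poset_def by (elim conjE)
  then show ?thesis
    using assms by blast
qed

lemma index_upper_bound:
  assumes "finite F" "F \<subseteq> I"
  shows "\<exists>u\<in>I. \<forall>i\<in>F. le i u"
proof -
  have "\<forall>F. finite F \<and> F \<subseteq> I \<longrightarrow> (\<exists>u\<in>I. \<forall>i\<in>F. le i u)"
    using directed_poset unfolding directed_poset_def by (elim conjE)
  then show ?thesis
    using assms by blast
qed

lemma index_common_upper_bound: "\<lbrakk>i \<in> I; j \<in> I\<rbrakk> \<Longrightarrow> \<exists>k\<in>I. le i k \<and> le j k"
  using index_upper_bound[of "{i, j}"] by auto

lemma connecting_maps:
  "\<forall>i\<in>I. \<forall>j\<in>I. le i j \<longrightarrow> continuous_map (Z i) (Z j) (z i j) \<and> M (Z i) (Z j) (z i j)"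
  using diagram unfolding directed_diagram_def by (elim conjE)

lemma connecting_continuous: "\<lbrakk>i \<in> I; j \<in> I; le i j\<rbrakk> \<Longrightarrow> continuous_map (Z i) (Z j) (z i j)"
  using connecting_maps by blast

lemma connecting_M: "\<lbrakk>i \<in> I; j \<in> I; le i j\<rbrakk> \<Longrightarrow> M (Z i) (Z j) (z i j)"
  using connecting_maps by blast

lemma connecting_id:
  assumes "i \<in> I" "x \<in> topspace (Z i)"
  shows "z i i x = x"
proof -
  have "\<forall>i\<in>I. \<forall>x\<in>topspace (Z i). z i i x = x"
    using diagram unfolding directed_diagram_def by (elim conjE)
  then show ?thesis
    using assms by blast
qed

lemma connecting_comp:
  assumes "i \<in> I" "j \<in> I" "k \<in> I" "le i j" "le j k" "x \<in> topspace (Z i)"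
  shows "z j k (z i j x) = z i k x"
proof -
  have "\<forall>i\<in>I. \<forall>j\<in>I. \<forall>k\<in>I. le i j \<longrightarrow> le j k \<longrightarrow>
          (\<forall>x\<in>topspace (Z i). z j k (z i j x) = z i k x)"
    using diagram unfolding directed_diagram_def by (elim conjE)
  then show ?thesis
    using assms by blast
qed

lemma connecting_in_topspace:
  "\<lbrakk>i \<in> I; j \<in> I; le i j; x \<in> topspace (Z i)\<rbrakk> \<Longrightarrow> z i j x \<in> topspace (Z j)"
  using connecting_continuous continuous_map_image_subset_topspace by blast

lemma cocone_continuous:
  assumes "i \<in> I"
  shows "continuous_map (Z i) C (c i)"
proof -
  have "\<forall>i\<in>I. continuous_map (Z i) C (c i)"
    using colimit unfolding directed_colimit_Top_def by (elim conjE)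
  then show ?thesis
    using assms by blast
qed

lemma cocone_compatible:
  assumes "i \<in> I" "j \<in> I" "le i j" "x \<in> topspace (Z i)"
  shows "c j (z i j x) = c i x"
proof -
  have "\<forall>i\<in>I. \<forall>j\<in>I. le i j \<longrightarrow> (\<forall>x\<in>topspace (Z i). c j (z i j x) = c i x)"
    using colimit unfolding directed_colimit_Top_def by (elim conjE)
  then show ?thesis
    using assms by blast
qed

lemma topspace_colimit: "topspace C = (\<Union>i\<in>I. c i ` topspace (Z i))"
  using colimit unfolding directed_colimit_Top_def by (elim conjE)

lemma cocone_eq_imp_connecting_eq:
  assumes "i \<in> I" "j \<in> I" "x \<in> topspace (Z i)" "y \<in> topspace (Z j)" "c i x = c j y"
  shows "\<exists>k\<in>I. le i k \<and> le j k \<and> z i k x = z j k y"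
proof -
  have "\<forall>i\<in>I. \<forall>j\<in>I. \<forall>x\<in>topspace (Z i). \<forall>y\<in>topspace (Z j).
          c i x = c j y \<longrightarrow> (\<exists>k\<in>I. le i k \<and> le j k \<and> z i k x = z j k y)"
    using colimit unfolding directed_colimit_Top_def by (elim conjE)
  then show ?thesis
    using assms by blast
qed

lemma openin_colimit:
  "openin C U \<longleftrightarrow> U \<subseteq> topspace C \<and> (\<forall>i\<in>I. openin (Z i) {x \<in> topspace (Z i). c i x \<in> U})"
proof -
  have "\<forall>U. openin C U \<longleftrightarrow> U \<subseteq> topspace C \<and> (\<forall>i\<in>I. openin (Z i) {x \<in> topspace (Z i). c i x \<in> U})"
    using colimit unfolding directed_colimit_Top_def by (elim conjE)
  then show ?thesis
    by blast
qed

lemma closedin_colimit: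
  "closedin C F \<longleftrightarrow> F \<subseteq> topspace C \<and> (\<forall>i\<in>I. closedin (Z i) {x \<in> topspace (Z i). c i x \<in> F})"
proof -
  have "{x \<in> topspace (Z i). c i x \<in> topspace C - F} = topspace (Z i) - {x \<in> topspace (Z i). c i x \<in> F}"
    if "i \<in> I" for i
    using cocone_continuous[OF that] continuous_map_image_subset_topspace by blast
  then show ?thesis
    by (auto simp: closedin_def openin_colimit)
qed

lemma cocone_eq_imp_connecting_eq_above:
  assumes "i \<in> I" "j \<in> I" "n \<in> I" "x \<in> topspace (Z i)" "y \<in> topspace (Z j)" "c i x = c j y"
  shows "\<exists>q\<in>I. le n q \<and> le i q \<and> le j q \<and> z i q x = z j q y"
proof -
  obtain k where k: "k \<in> I" "le i k" "le j k" "z i k x = z j k y"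
    using cocone_eq_imp_connecting_eq assms by blast
  obtain q where q: "q \<in> I" "le n q" "le k q"
    using index_common_upper_bound[OF assms(3) k(1)] by blast
  have "z i q x = z k q (z i k x)" "z j q y = z k q (z j k y)"
    using connecting_comp[of i k q x] connecting_comp[of j k q y] assms k q by simp_all
  moreover have "le i q" "le j q"
    using index_trans assms k q by blast+
  ultimately show ?thesis
    using q k(4) by auto
qed

lemma inj_on_cocone: "i \<in> I \<Longrightarrow> inj_on (c i) (topspace (Z i))"
proof (rule inj_onI)
  fix x y assume i: "i \<in> I" and xy: "x \<in> topspace (Z i)" "y \<in> topspace (Z i)" "c i x = c i y"
  obtain k where k: "k \<in> I" "le i k" "z i k x = z i k y"
    using cocone_eq_imp_connecting_eq[OF i i xy] by blast
  have "embedding_map (Z i) (Z k) (z i k)"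
    using M_embedding connecting_M i k by blast
  then have "inj_on (z i k) (topspace (Z i))"
    unfolding embedding_map_def by (rule homeomorphic_imp_injective_map)
  then show "x = y"
    using k(3) xy(1,2) by (simp add: inj_on_eq_iff)
qed

lemma connecting_closure_of_singleton_iff:
  "\<lbrakk>i \<in> I; j \<in> I; le i j; x \<in> topspace (Z i); y \<in> topspace (Z i)\<rbrakk>
     \<Longrightarrow> z i j x \<in> Z j closure_of {z i j y} \<longleftrightarrow> x \<in> Z i closure_of {y}"
  by (intro embedding_map_closure_of_singleton_iff M_embedding connecting_M)

text \<open>Membership in the closure of a point does not depend on the representatives or the stage.\<close>
lemma connecting_in_closure_of_singleton:
  assumes k: "k \<in> I" and m: "m \<in> I" and n: "n \<in> I" and j: "j \<in> I"
    and le: "le j m" "le j n" "le k n"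
    and e: "e \<in> topspace (Z k)" and b: "b \<in> topspace (Z j)"
    and e': "e' \<in> Z m closure_of {z j m b}" and eq: "c k e = c m e'"
  shows "z k n e \<in> Z n closure_of {z j n b}"
proof -
  have e'_top: "e' \<in> topspace (Z m)"
    using e' closure_of_subset_topspace by fast
  obtain q where q: "q \<in> I" "le n q" "le k q" "le m q" "z k q e = z m q e'"
    using cocone_eq_imp_connecting_eq_above[OF k m n e e'_top eq] by blast
  have jq: "le j q"
    using index_trans[OF j n q(1) le(2) q(2)] .
  have "z m q e' \<in> Z q closure_of {z m q (z j m b)}"
    using connecting_closure_of_singleton_iff[OF m q(1) q(4) e'_top connecting_in_topspace[OF j m le(1) b]] e'
    by simp
  moreover have "z m q (z j m b) = z n q (z j n b)"
    using connecting_comp[OF j m q(1) le(1) q(4) b] connecting_comp[OF j n q(1) le(2) q(2) b] by simp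
  moreover have "z m q e' = z n q (z k n e)"
    using q(5) connecting_comp[OF k n q(1) le(3) q(2) e] by simp
  ultimately have "z n q (z k n e) \<in> Z q closure_of {z n q (z j n b)}"
    by simp
  then show ?thesis
    using connecting_closure_of_singleton_iff[OF n q(1) q(2) connecting_in_topspace[OF k n le(3) e]
        connecting_in_topspace[OF j n le(2) b]]
    by simp
qed

lemma closedin_Union_cocone_image_closure_of_singleton:
  assumes j: "j \<in> I" and b: "b \<in> topspace (Z j)"
  shows "closedin C (\<Union>m\<in>{m \<in> I. le j m}. c m ` (Z m closure_of {z j m b}))"
    (is "closedin C ?K")
  unfolding closedin_colimit
proof (intro conjI ballI)
  show "?K \<subseteq> topspace C"
    unfolding topspace_colimit using closure_of_subset_topspace by fast
  fix k assume k: "k \<in> I"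
  obtain n where n: "n \<in> I" "le j n" "le k n"
    using index_common_upper_bound[OF j k] by blast
  have "{e \<in> topspace (Z k). c k e \<in> ?K} = {e \<in> topspace (Z k). z k n e \<in> Z n closure_of {z j n b}}"
  proof (intro set_eqI iffI)
    fix e assume "e \<in> {e \<in> topspace (Z k). c k e \<in> ?K}"
    then obtain m e' where "e \<in> topspace (Z k)" "m \<in> I" "le j m"
      "e' \<in> Z m closure_of {z j m b}" "c k e = c m e'"
      by force
    then show "e \<in> {e \<in> topspace (Z k). z k n e \<in> Z n closure_of {z j n b}}"
      using connecting_in_closure_of_singleton[OF k _ n(1) j _ n(2,3) _ b] by blast
  next
    fix e assume e: "e \<in> {e \<in> topspace (Z k). z k n e \<in> Z n closure_of {z j n b}}"
    then have "c k e = c n (z k n e)"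
      using cocone_compatible[OF k n(1) n(3)] by simp
    then show "e \<in> {e \<in> topspace (Z k). c k e \<in> ?K}"
      using e n by blast
  qed
  moreover have "closedin (Z k) {e \<in> topspace (Z k). z k n e \<in> Z n closure_of {z j n b}}"
    using connecting_continuous[OF k n(1,3)] closedin_closure_of
    by (rule closedin_continuous_map_preimage)
  ultimately show "closedin (Z k) {e \<in> topspace (Z k). c k e \<in> ?K}"
    by simp
qed

lemma cocone_closure_of_singleton_iff:
  assumes j: "j \<in> I" and b: "b \<in> topspace (Z j)" and b': "b' \<in> topspace (Z j)"
  shows "c j b \<in> C closure_of {c j b'} \<longleftrightarrow> b \<in> Z j closure_of {b'}"
proof
  assume "b \<in> Z j closure_of {b'}"
  moreover have "c j ` (Z j closure_of {b'}) \<subseteq> C closure_of (c j ` {b'})"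
    using cocone_continuous[OF j] by (rule continuous_map_image_closure_subset)
  ultimately show "c j b \<in> C closure_of {c j b'}"
    by auto
next
  assume b_in: "c j b \<in> C closure_of {c j b'}"
  \<comment> \<open>K is in fact the closure of c j b'; it suffices that it is a closed set containing c j b'.\<close>
  define K where "K = (\<Union>m\<in>{m \<in> I. le j m}. c m ` (Z m closure_of {z j m b'}))"
  have "b' \<in> Z j closure_of {z j j b'}"
    using b' closure_of_subset[of "{b'}" "Z j"] by (simp add: connecting_id[OF j b'])
  then have "c j b' \<in> K"
    using j index_refl[OF j] unfolding K_def by blast
  then have "C closure_of {c j b'} \<subseteq> K"
    using closedin_Union_cocone_image_closure_of_singleton[OF j b']
    by (simp add: K_def closure_of_minimal)
  then obtain m e' where "m \<in> I" "le j m" "e' \<in> Z m closure_of {z j m b'}" "c j b = c m e'"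
    using b_in unfolding K_def by blast
  then have "z j j b \<in> Z j closure_of {z j j b'}"
    using connecting_in_closure_of_singleton[OF j _ j j _ index_refl[OF j] index_refl[OF j] b b'] by blast
  then show "b \<in> Z j closure_of {b'}"
    by (simp add: connecting_id[OF j b] connecting_id[OF j b'])
qed

lemma cocone_image_mono:
  assumes "i \<in> I" "j \<in> I" "le i j"
  shows "c i ` topspace (Z i) \<subseteq> c j ` topspace (Z j)"
proof
  fix p assume "p \<in> c i ` topspace (Z i)"
  then obtain x where x: "x \<in> topspace (Z i)" "p = c i x" by blast
  then have "p = c j (z i j x)"
    using cocone_compatible[OF assms x(1)] by simp
  then show "p \<in> c j ` topspace (Z j)"
    using connecting_in_topspace[OF assms x(1)] by blast
qed

lemma subset_cocone_image_if_finite_subcover: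
  assumes "finite \<F>" "\<F> \<subseteq> (\<lambda>i. c i ` topspace (Z i)) ` I" "S \<subseteq> \<Union>\<F>"
  shows "\<exists>j\<in>I. S \<subseteq> c j ` topspace (Z j)"
proof -
  obtain F where F: "F \<subseteq> I" "finite F" "\<F> = (\<lambda>i. c i ` topspace (Z i)) ` F"
    using finite_subset_image[OF assms(1,2)] by blast
  obtain j where j: "j \<in> I" "\<forall>i\<in>F. le i j"
    using index_upper_bound[OF F(2,1)] by blast
  have "\<Union>\<F> \<subseteq> c j ` topspace (Z j)"
    using cocone_image_mono F(1) j unfolding F(3) by blast
  then show ?thesis
    using assms(3) j(1) by blast
qed

lemma finite_subset_cocone_image:
  assumes "finite S" "S \<subseteq> topspace C"
  shows "\<exists>j\<in>I. S \<subseteq> c j ` topspace (Z j)"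
proof -
  have "S \<subseteq> \<Union>((\<lambda>i. c i ` topspace (Z i)) ` I)"
    using assms(2) topspace_colimit by simp
  then obtain \<F> where "finite \<F>" "\<F> \<subseteq> (\<lambda>i. c i ` topspace (Z i)) ` I" "S \<subseteq> \<Union>\<F>"
    using finite_subset_Union[OF assms(1)] by blast
  then show ?thesis
    by (rule subset_cocone_image_if_finite_subcover)
qed

lemma cocone_preimage_cocone_image:
  assumes j: "j \<in> I" and k: "k \<in> I" and W: "W \<subseteq> topspace (Z j)"
  shows "{e \<in> topspace (Z k). c k e \<in> c j ` W}
           = (\<Union>n\<in>{n \<in> I. le j n \<and> le k n}. {e \<in> topspace (Z k). z k n e \<in> z j n ` W})"
proof (intro set_eqI iffI)
  fix e assume "e \<in> {e \<in> topspace (Z k). c k e \<in> c j ` W}"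
  then obtain x where e: "e \<in> topspace (Z k)" and x: "x \<in> W" "c k e = c j x" by blast
  obtain n where "n \<in> I" "le k n" "le j n" "z k n e = z j n x"
    using cocone_eq_imp_connecting_eq[OF k j e _ x(2)] x(1) W by blast
  then show "e \<in> (\<Union>n\<in>{n \<in> I. le j n \<and> le k n}. {e \<in> topspace (Z k). z k n e \<in> z j n ` W})"
    using e x(1) by blast
next
  fix e assume "e \<in> (\<Union>n\<in>{n \<in> I. le j n \<and> le k n}. {e \<in> topspace (Z k). z k n e \<in> z j n ` W})"
  then obtain n x where n: "n \<in> I" "le j n" "le k n" and e: "e \<in> topspace (Z k)"
    and x: "x \<in> W" "z k n e = z j n x"
    by blast
  have "c k e = c j x"
    using cocone_compatible[OF k n(1) n(3) e] cocone_compatible[OF j n(1,2)] x W by force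
  then show "e \<in> {e \<in> topspace (Z k). c k e \<in> c j ` W}"
    using e x(1) by blast
qed

lemma open_map_cocone:
  assumes M_open: "\<And>A B h. M A B h \<Longrightarrow> open_embedding_map A B h" and j: "j \<in> I"
  shows "open_map (Z j) C (c j)"
  unfolding open_map_def
proof (intro allI impI)
  fix W assume W: "openin (Z j) W"
  have W_top: "W \<subseteq> topspace (Z j)"
    using openin_subset[OF W] .
  have "openin (Z k) {e \<in> topspace (Z k). c k e \<in> c j ` W}" if k: "k \<in> I" for k
    unfolding cocone_preimage_cocone_image[OF j k W_top]
  proof (intro openin_Union ballI, clarsimp)
    fix n assume n: "n \<in> I" "le j n" "le k n"
    have "open_map (Z j) (Z n) (z j n)"
      using M_open connecting_M[OF j n(1,2)] by (intro open_embedding_imp_open_map)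
    then have "openin (Z n) (z j n ` W)"
      using W by (simp add: open_map_def)
    then show "openin (Z k) {e \<in> topspace (Z k). z k n e \<in> z j n ` W}"
      using connecting_continuous[OF k n(1,3)] by (rule openin_continuous_map_preimage[rotated])
  qed
  moreover have "c j ` W \<subseteq> topspace C"
    using W_top continuous_map_image_subset_topspace[OF cocone_continuous[OF j]] by blast
  ultimately show "openin C (c j ` W)"
    by (simp add: openin_colimit)
qed

lemma compact_subset_cocone_image:
  assumes M_open: "\<And>A B h. M A B h \<Longrightarrow> open_embedding_map A B h" and S: "compactin C S"
  shows "\<exists>j\<in>I. S \<subseteq> c j ` topspace (Z j)"
proof -
  have "\<forall>U\<in>(\<lambda>i. c i ` topspace (Z i)) ` I. openin C U"
    using open_map_cocone[OF M_open] by (auto simp: open_map_def)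
  moreover have "S \<subseteq> \<Union>((\<lambda>i. c i ` topspace (Z i)) ` I)"
    using compactin_subset_topspace[OF S] topspace_colimit by simp
  ultimately obtain \<F> where "finite \<F>" "\<F> \<subseteq> (\<lambda>i. c i ` topspace (Z i)) ` I" "S \<subseteq> \<Union>\<F>"
    using S unfolding compactin_def by meson
  then show ?thesis
    by (rule subset_cocone_image_if_finite_subcover)
qed

lemma continuous_lift_from_finite_space:
  assumes fin: "finite (topspace X)" and f: "continuous_map X C f"
  shows "\<exists>j\<in>I. \<exists>g. continuous_map X (Z j) g \<and> (\<forall>x\<in>topspace X. f x = c j (g x))"
proof -
  have "finite (f ` topspace X)" "f ` topspace X \<subseteq> topspace C"
    using fin continuous_map_image_subset_topspace[OF f] by simp_all
  then obtain j where j: "j \<in> I" "f ` topspace X \<subseteq> c j ` topspace (Z j)"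
    using finite_subset_cocone_image by blast
  obtain g where g: "g \<in> topspace X \<rightarrow> topspace (Z j)" "\<And>x. x \<in> topspace X \<Longrightarrow> f x = c j (g x)"
    using obtain_factor_through_image[OF j(2)] by blast
  have "continuous_map X (Z j) g"
  proof (rule continuous_map_from_finite_space[OF fin g(1)])
    fix x y assume xy: "x \<in> topspace X" "y \<in> topspace X" "x \<in> X closure_of {y}"
    have "f ` (X closure_of {y}) \<subseteq> C closure_of (f ` {y})"
      using f by (rule continuous_map_image_closure_subset)
    then have "c j (g x) \<in> C closure_of {c j (g y)}"
      using xy g(2) by auto
    moreover have "g x \<in> topspace (Z j)" "g y \<in> topspace (Z j)"
      using g(1) xy(1,2) by auto
    ultimately show "g x \<in> Z j closure_of {g y}"
      using cocone_closure_of_singleton_iff[OF j(1)] by simp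
  qed
  then show ?thesis
    using j(1) g(2) by blast
qed

lemma continuous_lift_from_compact_space:
  assumes M_open: "\<And>A B h. M A B h \<Longrightarrow> open_embedding_map A B h"
    and X: "compact_space X" and f: "continuous_map X C f"
  shows "\<exists>j\<in>I. \<exists>g. continuous_map X (Z j) g \<and> (\<forall>x\<in>topspace X. f x = c j (g x))"
proof -
  have "compactin C (f ` topspace X)"
    using image_compactin X f by (auto simp: compact_space_def)
  then obtain j where j: "j \<in> I" "f ` topspace X \<subseteq> c j ` topspace (Z j)"
    using compact_subset_cocone_image[OF M_open] by blast
  obtain g where g: "g \<in> topspace X \<rightarrow> topspace (Z j)" "\<And>x. x \<in> topspace X \<Longrightarrow> f x = c j (g x)"
    using obtain_factor_through_image[OF j(2)] by blast
  have "embedding_map (Z j) C (c j)"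
    using cocone_continuous[OF j(1)] open_map_cocone[OF M_open j(1)] inj_on_cocone[OF j(1)]
    by (rule injective_open_imp_embedding_map)
  moreover have "continuous_map X C (c j \<circ> g)"
    using f g(2) by (auto intro: continuous_map_eq)
  ultimately have "continuous_map X (Z j) g"
    using g(1) by (rule continuous_map_factor_through_embedding)
  then show ?thesis
    using j(1) g(2) by blast
qed

end

lemma fin_generated_if_continuous_lifts:
  fixes M :: "'b topology \<Rightarrow> 'b topology \<Rightarrow> ('b \<Rightarrow> 'b) \<Rightarrow> bool" and X :: "'a topology"
  assumes M_embedding: "\<And>A B h. M A B h \<Longrightarrow> embedding_map A B h"
    and lift: "\<And>(I :: 'i set) le Z z (C :: 'c topology) c f.
                 \<lbrakk>embedding_directed_colimit M I le Z z C c; continuous_map X C f\<rbrakk>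
                 \<Longrightarrow> \<exists>i\<in>I. \<exists>g. continuous_map X (Z i) g \<and> (\<forall>x\<in>topspace X. f x = c i (g x))"
  shows "fin_generated TYPE('i) TYPE('c) M X"
  unfolding fin_generated_def
proof (intro allI impI conjI)
  fix I :: "'i set" and le Z z and C :: "'c topology" and c f
  assume H: "directed_diagram M I le Z z \<and> directed_colimit_Top I le Z z C c \<and> continuous_map X C f"
  then have L: "embedding_directed_colimit M I le Z z C c"
    using M_embedding by (simp add: embedding_directed_colimit_def)
  interpret L: embedding_directed_colimit M I le Z z C c
    by (rule L)
  show "\<exists>i\<in>I. \<exists>g. continuous_map X (Z i) g \<and> (\<forall>x\<in>topspace X. f x = c i (g x))"
    using lift[OF L] H by blast
  show "\<forall>i\<in>I. \<forall>g g'. continuous_map X (Z i) g \<and> (\<forall>x\<in>topspace X. f x = c i (g x)) \<and>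
          continuous_map X (Z i) g' \<and> (\<forall>x\<in>topspace X. f x = c i (g' x)) \<longrightarrow>
          (\<exists>j\<in>I. le i j \<and> (\<forall>x\<in>topspace X. z i j (g x) = z i j (g' x)))"
  proof (intro ballI allI impI)
    fix i g g'
    assume i: "i \<in> I" and gg': "continuous_map X (Z i) g \<and> (\<forall>x\<in>topspace X. f x = c i (g x)) \<and>
          continuous_map X (Z i) g' \<and> (\<forall>x\<in>topspace X. f x = c i (g' x))"
    have "g x = g' x" if x: "x \<in> topspace X" for x
    proof -
      have "g x \<in> topspace (Z i)" "g' x \<in> topspace (Z i)" "c i (g x) = c i (g' x)"
        using gg' x continuous_map_image_subset_topspace by fastforce+
      then show ?thesis
        using L.inj_on_cocone[OF i] by (simp add: inj_on_eq_iff)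
    qed
    then show "\<exists>j\<in>I. le i j \<and> (\<forall>x\<in>topspace X. z i j (g x) = z i j (g' x))"
      using i L.index_refl[OF i] by auto
  qed
qed

definition coherent_with_finite_unions :: "'a topology \<Rightarrow> 'a set set \<Rightarrow> bool" where
  "coherent_with_finite_unions T \<U> \<longleftrightarrow>
     (\<forall>U. U \<subseteq> topspace T \<and>
          (\<forall>\<A>. finite \<A> \<and> \<A> \<subseteq> \<U> \<longrightarrow> openin (subtopology T (\<Union>\<A>)) (U \<inter> \<Union>\<A>))
          \<longrightarrow> openin T U)"

lemma coherent_with_finite_unions_indiscrete_singletons:
  "coherent_with_finite_unions (indiscrete_topology S) ((\<lambda>x. {x}) ` S)"
  unfolding coherent_with_finite_unions_def
proof (intro allI impI)
  fix U
  assume "U \<subseteq> topspace (indiscrete_topology S) \<and>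
    (\<forall>\<A>. finite \<A> \<and> \<A> \<subseteq> (\<lambda>x. {x}) ` S
         \<longrightarrow> openin (subtopology (indiscrete_topology S) (\<Union>\<A>)) (U \<inter> \<Union>\<A>))"
  then have U: "U \<subseteq> S"
    and stages: "\<And>\<A>. \<lbrakk>finite \<A>; \<A> \<subseteq> (\<lambda>x. {x}) ` S\<rbrakk>
                   \<Longrightarrow> openin (subtopology (indiscrete_topology S) (\<Union>\<A>)) (U \<inter> \<Union>\<A>)"
    by simp_all
  \<comment> \<open>A nonempty open set meets every two-point subspace in an open, hence the full, set.\<close>
  have "y \<in> U" if x: "x \<in> U" and y: "y \<in> S" for x y
  proof -
    have xy: "{x, y} \<subseteq> S"
      using x y U by auto
    then have "openin (subtopology (indiscrete_topology S) (\<Union>{{x}, {y}})) (U \<inter> \<Union>{{x}, {y}})"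
      by (intro stages) auto
    moreover have "\<Union>{{x}, {y}} = {x, y}"
      by blast
    ultimately have "openin (indiscrete_topology {x, y}) (U \<inter> {x, y})"
      using xy by (simp add: subtopology_indiscrete_topology)
    then show "y \<in> U"
      using x by (auto simp: openin_indiscrete_topology)
  qed
  then have "U = {} \<or> U = S"
    using U by blast
  then show "openin (indiscrete_topology S) U"
    by (simp add: openin_indiscrete_topology)
qed

lemma coherent_with_finite_unions_open_cover:
  assumes \<U>: "\<And>V. V \<in> \<U> \<Longrightarrow> openin X V" and cover: "topspace X \<subseteq> \<Union>\<U>"
  shows "coherent_with_finite_unions X \<U>"
  unfolding coherent_with_finite_unions_def
proof (intro allI impI)
  fix U
  assume "U \<subseteq> topspace X \<and>
    (\<forall>\<A>. finite \<A> \<and> \<A> \<subseteq> \<U> \<longrightarrow> openin (subtopology X (\<Union>\<A>)) (U \<inter> \<Union>\<A>))"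
  then have U: "U \<subseteq> topspace X"
    and stages: "\<And>V. V \<in> \<U> \<Longrightarrow> openin (subtopology X V) (U \<inter> V)"
    by (auto dest: spec[of _ "{_}"])
  have "openin X (U \<inter> V)" if V: "V \<in> \<U>" for V
    using stages[OF V] openin_trans_full \<U> V by blast
  then have "openin X (\<Union>V\<in>\<U>. U \<inter> V)"
    by (intro openin_Union) blast
  moreover have "(\<Union>V\<in>\<U>. U \<inter> V) = U"
    using U cover by blast
  ultimately show "openin X U"
    by simp
qed

lemma directed_poset_finite_subsets: "directed_poset {\<A>. finite \<A> \<and> \<A> \<subseteq> \<U>} (\<subseteq>)"
  unfolding directed_poset_def
proof (intro conjI ballI allI impI)
  fix \<F> assume "finite \<F> \<and> \<F> \<subseteq> {\<A>. finite \<A> \<and> \<A> \<subseteq> \<U>}"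
  then have "\<Union>\<F> \<in> {\<A>. finite \<A> \<and> \<A> \<subseteq> \<U>}"
    by auto
  moreover have "\<forall>\<A>\<in>\<F>. \<A> \<subseteq> \<Union>\<F>"
    by (simp add: Union_upper)
  ultimately show "\<exists>\<B>\<in>{\<A>. finite \<A> \<and> \<A> \<subseteq> \<U>}. \<forall>\<A>\<in>\<F>. \<A> \<subseteq> \<B>"
    by (rule bexI[rotated])
qed (rule order_refl order_trans order_antisym; assumption)+

lemma directed_diagram_finite_unions:
  assumes incl: "\<And>\<A> \<B>. \<lbrakk>finite \<B>; \<B> \<subseteq> \<U>; \<A> \<subseteq> \<B>\<rbrakk>
                   \<Longrightarrow> M (subtopology T (\<Union>\<A>)) (subtopology T (\<Union>\<B>)) (\<lambda>x. x)"
  shows "directed_diagram M {\<A>. finite \<A> \<and> \<A> \<subseteq> \<U>} (\<subseteq>) (\<lambda>\<A>. subtopology T (\<Union>\<A>)) (\<lambda>_ _ x. x)"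
  unfolding directed_diagram_def
proof (intro conjI ballI impI directed_poset_finite_subsets)
  fix \<A> \<B> :: "'a set set"
  assume "\<A> \<in> {\<A>. finite \<A> \<and> \<A> \<subseteq> \<U>}" "\<B> \<in> {\<A>. finite \<A> \<and> \<A> \<subseteq> \<U>}" "\<A> \<subseteq> \<B>"
  then show "M (subtopology T (\<Union>\<A>)) (subtopology T (\<Union>\<B>)) (\<lambda>x. x)"
    using incl by blast
  have "\<Union>\<A> \<subseteq> \<Union>\<B>"
    using \<open>\<A> \<subseteq> \<B>\<close> by (rule Union_mono)
  then show "continuous_map (subtopology T (\<Union>\<A>)) (subtopology T (\<Union>\<B>)) (\<lambda>x. x)"
    by (auto simp: continuous_map_in_subtopology topspace_subtopology)
qed (rule refl)+

lemma directed_colimit_finite_unions: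
  assumes cover: "\<Union>\<U> = topspace T"
    and coherent: "coherent_with_finite_unions T \<U>"
  shows "directed_colimit_Top {\<A>. finite \<A> \<and> \<A> \<subseteq> \<U>} (\<subseteq>) (\<lambda>\<A>. subtopology T (\<Union>\<A>)) (\<lambda>_ _ x. x)
           T (\<lambda>_ x. x)"
proof -
  let ?I = "{\<A>. finite \<A> \<and> \<A> \<subseteq> \<U>}"
  have topspace_stage: "topspace (subtopology T (\<Union>\<A>)) = \<Union>\<A>" if "\<A> \<subseteq> \<U>" for \<A>
    using cover that by (auto simp: topspace_subtopology)
  have "topspace T = (\<Union>\<A>\<in>?I. (\<lambda>x. x) ` topspace (subtopology T (\<Union>\<A>)))"
  proof
    show "topspace T \<subseteq> (\<Union>\<A>\<in>?I. (\<lambda>x. x) ` topspace (subtopology T (\<Union>\<A>)))"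
    proof
      fix x assume "x \<in> topspace T"
      then obtain U where "U \<in> \<U>" "x \<in> U"
        using cover by blast
      then have "{U} \<in> ?I" "x \<in> topspace (subtopology T (\<Union>{U}))"
        using topspace_stage[of "{U}"] by auto
      then show "x \<in> (\<Union>\<A>\<in>?I. (\<lambda>x. x) ` topspace (subtopology T (\<Union>\<A>)))"
        by blast
    qed
    show "(\<Union>\<A>\<in>?I. (\<lambda>x. x) ` topspace (subtopology T (\<Union>\<A>))) \<subseteq> topspace T"
      by (simp add: UN_least topspace_subtopology)
  qed
  moreover have "\<exists>\<C>\<in>?I. \<A> \<subseteq> \<C> \<and> \<B> \<subseteq> \<C>" if "\<A> \<in> ?I" "\<B> \<in> ?I" for \<A> \<B>
  proof
    show "\<A> \<union> \<B> \<in> ?I"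
      using that by simp
  qed simp
  moreover have "openin T U \<longleftrightarrow> U \<subseteq> topspace T \<and>
          (\<forall>\<A>\<in>?I. openin (subtopology T (\<Union>\<A>)) {x \<in> topspace (subtopology T (\<Union>\<A>)). x \<in> U})"
    for U
  proof -
    have "{x \<in> topspace (subtopology T (\<Union>\<A>)). x \<in> U} = U \<inter> \<Union>\<A>" if "\<A> \<in> ?I" for \<A>
      using topspace_stage that by auto
    moreover have "openin T U \<Longrightarrow> openin (subtopology T (\<Union>\<A>)) (U \<inter> \<Union>\<A>)" for \<A>
      by (simp add: openin_subtopology_Int)
    ultimately show ?thesis
      using coherent openin_subset unfolding coherent_with_finite_unions_def
      by (metis (no_types, lifting) mem_Collect_eq)
  qed
  ultimately show ?thesis
    unfolding directed_colimit_Top_def by simp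
qed

lemma finite_subcover_if_fin_generated:
  fixes M :: "'a topology \<Rightarrow> 'a topology \<Rightarrow> ('a \<Rightarrow> 'a) \<Rightarrow> bool" and X T :: "'a topology"
  assumes fg: "fin_generated TYPE('a set set) TYPE('a) M X"
    and incl: "\<And>\<A> \<B>. \<lbrakk>finite \<B>; \<B> \<subseteq> \<U>; \<A> \<subseteq> \<B>\<rbrakk>
                  \<Longrightarrow> M (subtopology T (\<Union>\<A>)) (subtopology T (\<Union>\<B>)) (\<lambda>x. x)"
    and cover: "\<Union>\<U> = topspace T"
    and coherent: "coherent_with_finite_unions T \<U>"
    and id_cont: "continuous_map X T (\<lambda>x. x)"
  shows "\<exists>\<A>. finite \<A> \<and> \<A> \<subseteq> \<U> \<and> topspace X \<subseteq> \<Union>\<A>"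
proof -
  have diagram: "directed_diagram M {\<A>. finite \<A> \<and> \<A> \<subseteq> \<U>} (\<subseteq>) (\<lambda>\<A>. subtopology T (\<Union>\<A>))
                   (\<lambda>_ _ x. x)"
    by (rule directed_diagram_finite_unions[where \<U> = \<U> and M = M and T = T, OF incl])
  have colimit: "directed_colimit_Top {\<A>. finite \<A> \<and> \<A> \<subseteq> \<U>} (\<subseteq>) (\<lambda>\<A>. subtopology T (\<Union>\<A>))
                   (\<lambda>_ _ x. x) T (\<lambda>_ x. x)"
    using cover coherent by (rule directed_colimit_finite_unions)
  have "\<exists>\<A>\<in>{\<A>. finite \<A> \<and> \<A> \<subseteq> \<U>}. \<exists>g. continuous_map X (subtopology T (\<Union>\<A>)) g \<and>
          (\<forall>x\<in>topspace X. x = g x)"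
    using fg[unfolded fin_generated_def, rule_format, THEN conjunct1, OF conjI[OF diagram conjI[OF colimit id_cont]]]
    by simp
  then obtain \<A> g where \<A>: "finite \<A>" "\<A> \<subseteq> \<U>"
    and g: "continuous_map X (subtopology T (\<Union>\<A>)) g" "\<forall>x\<in>topspace X. x = g x"
    by blast
  have "topspace X \<subseteq> \<Union>\<A>"
  proof
    fix x assume x: "x \<in> topspace X"
    then have "g x \<in> topspace (subtopology T (\<Union>\<A>))"
      using g(1) continuous_map_image_subset_topspace by blast
    then show "x \<in> \<Union>\<A>"
      using g(2) x by (simp add: topspace_subtopology)
  qed
  then show ?thesis
    using \<A> by blast
qed

lemma fin_generated_embedding_if_finite:
  fixes X :: "'a topology"
  assumes X: "finite (topspace X)"
  shows "fin_generated TYPE('i) TYPE('c)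
           (embedding_map :: 'b topology \<Rightarrow> 'b topology \<Rightarrow> ('b \<Rightarrow> 'b) \<Rightarrow> bool) X"
proof (rule fin_generated_if_continuous_lifts)
  fix I :: "'i set" and le Z z and C :: "'c topology" and c f
  assume L: "embedding_directed_colimit embedding_map I le Z z C c" and f: "continuous_map X C f"
  show "\<exists>i\<in>I. \<exists>g. continuous_map X (Z i) g \<and> (\<forall>x\<in>topspace X. f x = c i (g x))"
    by (rule embedding_directed_colimit.continuous_lift_from_finite_space[OF L X f])
qed

lemma fin_generated_open_embedding_if_compact_space:
  fixes X :: "'a topology"
  assumes X: "compact_space X"
  shows "fin_generated TYPE('i) TYPE('c)
           (open_embedding_map :: 'b topology \<Rightarrow> 'b topology \<Rightarrow> ('b \<Rightarrow> 'b) \<Rightarrow> bool) X"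
proof (rule fin_generated_if_continuous_lifts)
  show "\<And>A B h. open_embedding_map A B h \<Longrightarrow> embedding_map A B h"
    by (rule open_embedding_imp_embedding_map)
  fix I :: "'i set" and le Z z and C :: "'c topology" and c f
  assume L: "embedding_directed_colimit open_embedding_map I le Z z C c"
    and f: "continuous_map X C f"
  show "\<exists>i\<in>I. \<exists>g. continuous_map X (Z i) g \<and> (\<forall>x\<in>topspace X. f x = c i (g x))"
    by (rule embedding_directed_colimit.continuous_lift_from_compact_space[OF L _ X f])
qed

lemma finite_topspace_if_fin_generated_embedding:
  fixes X :: "'a topology"
  assumes fg: "fin_generated TYPE('a set set) TYPE('a)
                 (embedding_map :: 'a topology \<Rightarrow> 'a topology \<Rightarrow> ('a \<Rightarrow> 'a) \<Rightarrow> bool) X"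
  shows "finite (topspace X)"
proof -
  define T where "T = indiscrete_topology (topspace X)"
  define \<U> where "\<U> = (\<lambda>x. {x}) ` topspace X"
  have coherent: "coherent_with_finite_unions T \<U>"
    unfolding T_def \<U>_def by (rule coherent_with_finite_unions_indiscrete_singletons)
  have incl: "embedding_map (subtopology T (\<Union>\<A>)) (subtopology T (\<Union>\<B>)) (\<lambda>x. x)"
    if "finite \<B>" "\<B> \<subseteq> \<U>" "\<A> \<subseteq> \<B>" for \<A> \<B>
    using that(3) by (intro embedding_map_inclusion Union_mono)
  have cover: "\<Union>\<U> = topspace T"
    by (auto simp: \<U>_def T_def)
  have id_cont: "continuous_map X T (\<lambda>x. x)"
    by (simp add: T_def continuous_map_into_indiscrete_topology)
  obtain \<A> where \<A>: "finite \<A>" "\<A> \<subseteq> \<U>" "topspace X \<subseteq> \<Union>\<A>"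
    using finite_subcover_if_fin_generated[where \<U> = \<U> and T = T, OF fg incl cover coherent id_cont]
    by blast
  moreover have "finite (\<Union>\<A>)"
    using \<A>(1,2) by (auto simp: \<U>_def)
  ultimately show ?thesis
    using finite_subset by blast
qed

lemma compact_space_if_fin_generated_open_embedding:
  fixes X :: "'a topology"
  assumes fg: "fin_generated TYPE('a set set) TYPE('a)
                 (open_embedding_map :: 'a topology \<Rightarrow> 'a topology \<Rightarrow> ('a \<Rightarrow> 'a) \<Rightarrow> bool) X"
  shows "compact_space X"
  unfolding compact_space_alt
proof (intro allI impI)
  fix \<U> assume \<U>: "(\<forall>U\<in>\<U>. openin X U) \<and> topspace X \<subseteq> \<Union>\<U>"
  have incl: "open_embedding_map (subtopology X (\<Union>\<A>)) (subtopology X (\<Union>\<B>)) (\<lambda>x. x)"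
    if "finite \<B>" "\<B> \<subseteq> \<U>" "\<A> \<subseteq> \<B>" for \<A> \<B>
  proof (rule open_embedding_map_inclusion)
    show "openin X (\<Union>\<A>)"
      using \<U> that by (intro openin_Union) blast
    show "\<Union>\<A> \<subseteq> \<Union>\<B>"
      using that(3) by (rule Union_mono)
  qed
  have cover: "\<Union>\<U> = topspace X"
    using \<U> openin_subset by blast
  have coherent: "coherent_with_finite_unions X \<U>"
    using \<U> by (intro coherent_with_finite_unions_open_cover) blast+
  have id_cont: "continuous_map X X (\<lambda>x. x)"
    by simp
  show "\<exists>\<F>. finite \<F> \<and> \<F> \<subseteq> \<U> \<and> topspace X \<subseteq> \<Union>\<F>"
    by (rule finite_subcover_if_fin_generated[where \<U> = \<U> and T = X, OF fg incl cover coherent id_cont])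
qed

theorem theorem3p3:
  fixes X :: "'a topology"
  shows
   "(finite (topspace X) \<longrightarrow>
        fin_generated TYPE('i) TYPE('c) (embedding_map :: 'b topology \<Rightarrow> 'b topology \<Rightarrow> ('b \<Rightarrow> 'b) \<Rightarrow> bool) X)
    \<and> (fin_generated TYPE('a set set) TYPE('a) (embedding_map :: 'a topology \<Rightarrow> 'a topology \<Rightarrow> ('a \<Rightarrow> 'a) \<Rightarrow> bool) X
        \<longrightarrow> finite (topspace X))
    \<and> (compact_space X \<longrightarrow>
        fin_generated TYPE('i) TYPE('c) (open_embedding_map :: 'b topology \<Rightarrow> 'b topology \<Rightarrow> ('b \<Rightarrow> 'b) \<Rightarrow> bool) X)
    \<and> (fin_generated TYPE('a set set) TYPE('a) (open_embedding_map :: 'a topology \<Rightarrow> 'a topology \<Rightarrow> ('a \<Rightarrow> 'a) \<Rightarrow> bool) X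
        \<longrightarrow> compact_space X)"
  using fin_generated_embedding_if_finite finite_topspace_if_fin_generated_embedding
    fin_generated_open_embedding_if_compact_space compact_space_if_fin_generated_open_embedding
  by blast

end
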